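(* Let $r\ge 4$ and let $p_1,\dots,p_r$ be points in general position in $\mathbb{P}^3$ over an algebraically closed field of characteristic $0$. For integers $d\ge 0$ and $m_1,\dots,m_r\ge 0$, let $\mathcal{L}=\mathcal{L}_3(d,m_1,\dots,m_r)$ and put $k=2d-\sum_{i=1}^4 m_i$ and $$\mathrm{Cr}(\mathcal{L})=\mathcal{L}_3(d+k,\,m_1+k,\dots,m_4+k,\,m_5,\dots,m_r).$$ Suppose that $2d\ge m_i+m_j+m_k$ for every choice of three distinct indices $\{i,j,k\}\subset\{1,2,3,4\}$. For $1\le i<j\le 4$ set $t_{ij}=m_i+m_j-d$. Then $$v(\mathrm{Cr}(\mathcal{L}))-v(\mathcal{L})=\sum_{\substack{1\le i<j\le 4\\ t_{ij}\ge 2}}\binom{1+t_{ij}}{3}-\sum_{\substack{1\le i<j\le 4\\ t_{ij}\le -2}}\binom{1-t_{ij}}{3}.$$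
   Context: $\mathcal{L}_3(d,m_1,\dots,m_r)$ denotes the linear system of surfaces of degree $d$ in $\mathbb{P}^3$ passing through the general points $p_1,\dots,p_r$ with multiplicity at least $m_i$ at $p_i$. Its virtual dimension is $v(\mathcal{L}_3(d,m_1,\dots,m_r))=\binom{d+3}{3}-\sum_{i=1}^r\binom{m_i+2}{3}-1$. The system $\mathrm{Cr}(\mathcal{L})$ is the image of $\mathcal{L}$ under the cubo-cubic Cremona transformation $(x_0:x_1:x_2:x_3)\dashrightarrow(x_0^{-1}:x_1^{-1}:x_2^{-1}:x_3^{-1})$ with $p_1,\dots,p_4$ placed at the coordinate points. *)

theory Defs
  imports Main
begin

text \<open>Binomial coefficient with an integer top entry, used only for nonnegative tops
  (for negative tops we return 0; this case never arises in the theorem).\<close>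
definition ibinom :: "int \<Rightarrow> nat \<Rightarrow> int" where
  "ibinom n k = (if n < 0 then 0 else int (nat n choose k))"

definition vdim3 :: "int \<Rightarrow> (nat \<Rightarrow> int) \<Rightarrow> nat \<Rightarrow> int" where
  "vdim3 d m r = ibinom (d + 3) 3 - (\<Sum>i = 1..r. ibinom (m i + 2) 3) - 1"

definition cr_k :: "int \<Rightarrow> (nat \<Rightarrow> int) \<Rightarrow> int" where
  "cr_k d m = 2 * d - (\<Sum>i = 1..4. m i)"

definition cr_deg :: "int \<Rightarrow> (nat \<Rightarrow> int) \<Rightarrow> int" where
  "cr_deg d m = d + cr_k d m"

definition cr_mult :: "int \<Rightarrow> (nat \<Rightarrow> int) \<Rightarrow> nat \<Rightarrow> int" where
  "cr_mult d m i = (if 1 \<le> i \<and> i \<le> 4 then m i + cr_k d m else m i)"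

end

theory Submission
  imports Defs
begin

text \<open>For n \<ge> 0 we have 6 binom(n, 3) = n(n - 1)(n - 2), and the hypotheses 2d \<ge> m_i + m_j + m_l make
  every binomial top in v(Cr(L)) - v(L) nonnegative, so six times the left-hand side is a
  cubic polynomial in d, m_1, ..., m_4. On the right, each pair contributes
  binom(1 + t, 3) or -binom(1 - t, 3) or nothing, which in all three cases is (t^3 - t)/6.
  The theorem thus becomes a polynomial identity.\<close>

lemma two_times_choose_two: "2 * int (n choose 2) = int n * (int n - 1)"
  by (induction n) (simp_all add: numeral_2_eq_2 algebra_simps)

lemma six_times_choose_three: "6 * int (n choose 3) = int n * (int n - 1) * (int n - 2)"
proof (induction n)
  case (Suc n)
  have "Suc n choose 3 = (n choose 2) + (n choose 3)"
    by (simp add: numeral_3_eq_3 numeral_2_eq_2)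
  then show ?case
    using Suc.IH two_times_choose_two[of n] by (simp add: algebra_simps)
qed simp

lemma six_times_ibinom_three:
  assumes "0 \<le> n"
  shows "6 * ibinom n 3 = n * (n - 1) * (n - 2)"
  using assms six_times_choose_three[of "nat n"] by (simp add: ibinom_def)

definition pair_defect :: "int \<Rightarrow> int" where
  "pair_defect t = (if 2 \<le> t then ibinom (1 + t) 3 else 0)
                 - (if t \<le> -2 then ibinom (1 - t) 3 else 0)"

lemma six_times_pair_defect: "6 * pair_defect t = t ^ 3 - t"
proof -
  consider "2 \<le> t" | "t \<le> -2" | "t \<in> {-1, 0, 1}" by fastforce
  then show ?thesis
    by cases (auto simp: pair_defect_def six_times_ibinom_three power3_eq_cube algebra_simps)
qed

definition pairs4 :: "(nat \<times> nat) set" where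
  "pairs4 = {(i, j). 1 \<le> i \<and> i < j \<and> j \<le> 4}"

lemma pairs4_eq: "pairs4 = {(1, 2), (1, 3), (1, 4), (2, 3), (2, 4), (3, 4)}"
  unfolding pairs4_def by auto

lemma sum_pair_binomials_eq_sum_pair_defect:
  "(\<Sum>(i, j) \<in> {(i, j). 1 \<le> i \<and> i < j \<and> j \<le> (4::nat) \<and> 2 \<le> t i j}. ibinom (1 + t i j) 3)
 - (\<Sum>(i, j) \<in> {(i, j). 1 \<le> i \<and> i < j \<and> j \<le> (4::nat) \<and> t i j \<le> -2}. ibinom (1 - t i j) 3)
 = (\<Sum>(i, j) \<in> pairs4. pair_defect (t i j))"
proof -
  have filter: "{(i, j). 1 \<le> i \<and> i < j \<and> j \<le> (4::nat) \<and> P i j} = {p \<in> pairs4. case_prod P p}"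
    for P by (auto simp: pairs4_def)
  have "finite pairs4" by (simp add: pairs4_eq)
  then show ?thesis
    unfolding filter pair_defect_def
    by (simp add: sum.inter_filter sum_subtractf case_prod_beta)
qed

lemma cremona_cubic_identity:
  fixes d :: "'a::comm_ring_1" and m :: "nat \<Rightarrow> 'a"
  defines "k \<equiv> 2 * d - (\<Sum>i = 1..4. m i)"
    and "f \<equiv> \<lambda>n. n * (n - 1) * (n - 2)"
  shows "f (d + k + 3) - f (d + 3) - (\<Sum>i = 1..4. f (m i + k + 2) - f (m i + 2))
       = (\<Sum>(i, j) \<in> pairs4. (m i + m j - d) ^ 3 - (m i + m j - d))"
proof -
  have "{1..4::nat} = {1, 2, 3, 4}" by auto
  then show ?thesis
    unfolding k_def f_def pairs4_eq by (simp add: power3_eq_cube algebra_simps)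
qed

lemma vdim3_cremona_diff:
  assumes "4 \<le> r"
  shows "vdim3 (cr_deg d m) (cr_mult d m) r - vdim3 d m r
       = ibinom (d + cr_k d m + 3) 3 - ibinom (d + 3) 3
       - (\<Sum>i = 1..4. ibinom (m i + cr_k d m + 2) 3 - ibinom (m i + 2) 3)"
proof -
  have "(\<Sum>i = 1..r. ibinom (cr_mult d m i + 2) 3) - (\<Sum>i = 1..r. ibinom (m i + 2) 3)
      = (\<Sum>i = 1..r. ibinom (cr_mult d m i + 2) 3 - ibinom (m i + 2) 3)"
    by (simp add: sum_subtractf)
  also have "\<dots> = (\<Sum>i = 1..4. ibinom (cr_mult d m i + 2) 3 - ibinom (m i + 2) 3)"
    using assms by (intro sum.mono_neutral_right) (auto simp: cr_mult_def)
  also have "\<dots> = (\<Sum>i = 1..4. ibinom (m i + cr_k d m + 2) 3 - ibinom (m i + 2) 3)"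
    by (intro sum.cong) (auto simp: cr_mult_def)
  finally show ?thesis
    unfolding vdim3_def cr_deg_def by (simp add: algebra_simps)
qed

theorem mainTheorem1:
  fixes d :: int and m :: "nat \<Rightarrow> int" and r :: nat
  assumes "r \<ge> 4"
    and "d \<ge> 0"
    and "\<forall>i\<in>{1..r}. m i \<ge> 0"
    and "\<forall>i j l. {i, j, l} \<subseteq> {1..4} \<and> i \<noteq> j \<and> i \<noteq> l \<and> j \<noteq> l
            \<longrightarrow> 2 * d \<ge> m i + m j + m l"
  shows "vdim3 (cr_deg d m) (cr_mult d m) r - vdim3 d m r
       = (\<Sum>(i, j) \<in> {(i, j). 1 \<le> i \<and> i < j \<and> j \<le> (4::nat) \<and> m i + m j - d \<ge> 2}.
             ibinom (1 + (m i + m j - d)) 3)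
       - (\<Sum>(i, j) \<in> {(i, j). 1 \<le> i \<and> i < j \<and> j \<le> (4::nat) \<and> m i + m j - d \<le> -2}.
             ibinom (1 - (m i + m j - d)) 3)"
proof -
  let ?k = "cr_k d m"
  have k_eq: "?k = 2 * d - (m 1 + m 2 + m 3 + m 4)"
    by (simp add: cr_k_def numeral_eq_Suc)
  have m_nonneg: "0 \<le> m i" if "i \<in> {1..4}" for i
    using assms(1,3) that by auto
  have "m 1 + m 2 + m 3 \<le> 2 * d" "m 1 + m 2 + m 4 \<le> 2 * d"
       "m 1 + m 3 + m 4 \<le> 2 * d" "m 2 + m 3 + m 4 \<le> 2 * d"
    using assms(4) by (auto dest!: spec[of _ 1] spec[of _ 2] spec[of _ 3] spec[of _ 4])
  \<comment> \<open>d + k = 3d - (m_1 + ... + m_4), and the four inequalities sum to 3(m_1 + ... + m_4) \<le> 8d\<close>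
  then have dk_nonneg: "0 \<le> d + ?k" and mk_nonneg: "\<forall>i\<in>{1..4}. 0 \<le> m i + ?k"
    using assms(2) unfolding k_eq by (auto simp: atLeastAtMost_iff le_Suc_eq numeral_eq_Suc)
  have "6 * (vdim3 (cr_deg d m) (cr_mult d m) r - vdim3 d m r)
      = 6 * ibinom (d + ?k + 3) 3 - 6 * ibinom (d + 3) 3
      - (\<Sum>i = 1..4. 6 * ibinom (m i + ?k + 2) 3 - 6 * ibinom (m i + 2) 3)"
    using assms(1) by (simp add: vdim3_cremona_diff sum_distrib_left right_diff_distrib)
  also have "\<dots> = (\<Sum>(i, j) \<in> pairs4. (m i + m j - d) ^ 3 - (m i + m j - d))"
    using cremona_cubic_identity[of d m, folded cr_k_def] dk_nonneg mk_nonneg m_nonneg assms(2)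
    by (simp add: six_times_ibinom_three)
  also have "\<dots> = 6 * (\<Sum>(i, j) \<in> pairs4. pair_defect (m i + m j - d))"
    by (simp add: six_times_pair_defect sum_distrib_left case_prod_beta)
  finally show ?thesis
    using sum_pair_binomials_eq_sum_pair_defect[of "\<lambda>i j. m i + m j - d"] by simp
qed

end
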